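(* Let $A$ be a real square matrix such that $A^n>0$ (all entries strictly positive) for some $n>0$. Let $\lambda$ be its Perron–Frobenius eigenvalue, and let $r>0$ satisfy $\lambda>r>|\mu|$ for every eigenvalue $\mu\neq\lambda$ of $A$. Let $v\in NonN(A)$ with $v\notin\ker(A-\lambda I)$. Then there exist $C>0$ and $N$ such that for every $n>N$ and every vector $w$ with $A^n w=v$ we have $\|w\|_1>C/r^n$.
   Context: For a square matrix $A$ acting on $\mathbb{F}^d$ ($\mathbb{F}=\mathbb{R}$ or $\mathbb{C}$), the non-nilpotent subspace $NonN(A)$ is the direct sum of the generalized eigenspaces of $A$ belonging to nonzero eigenvalues (equivalently, the eventual range $\bigcap_{n} A^n(\mathbb{F}^d)$). The Perron–Frobenius eigenvalue of a matrix with $A^n>0$ for some $n$ is its simple, real, positive eigenvalue of largest modulus. *)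

theory Defs
  imports "Jordan_Normal_Form.Matrix_Kernel" "Jordan_Normal_Form.Char_Poly"
begin

definition pos_mat :: "real mat \<Rightarrow> bool" where
  "pos_mat B \<longleftrightarrow> (\<forall>i < dim_row B. \<forall>j < dim_col B. B $$ (i,j) > 0)"

definition cplx_eigenvalue :: "real mat \<Rightarrow> complex \<Rightarrow> bool" where
  "cplx_eigenvalue A \<mu> \<longleftrightarrow> eigenvalue (map_mat complex_of_real A) \<mu>"

definition pf_eigenvalue :: "real mat \<Rightarrow> real \<Rightarrow> bool" where
  "pf_eigenvalue A l \<longleftrightarrow> l > 0 \<and> cplx_eigenvalue A (complex_of_real l)
     \<and> order (complex_of_real l) (char_poly (map_mat complex_of_real A)) = 1
     \<and> (\<forall>\<mu>. cplx_eigenvalue A \<mu> \<and> \<mu> \<noteq> complex_of_real l \<longrightarrow> cmod \<mu> < l)"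

text \<open>Non-nilpotent subspace = eventual range.\<close>
definition NonN :: "real mat \<Rightarrow> real vec set" where
  "NonN A = (\<Inter>k. {A ^\<^sub>m k *\<^sub>v x | x. x \<in> carrier_vec (dim_col A)})"

definition norm1 :: "real vec \<Rightarrow> real" where
  "norm1 w = (\<Sum>i<dim_vec w. \<bar>w $ i\<bar>)"

end

theory Submission
  imports Defs "Jordan_Normal_Form.Spectral_Radius" "Jordan_Normal_Form.Schur_Decomposition"
begin

text \<open>Over \<open>\<complex>\<close>, put \<open>A = P T Q\<close> in Schur form with the simple eigenvalue \<open>\<lambda>\<close> in the
  top left corner. Discarding the first Schur coordinate, \<open>E = diag(0,1,\<dots>,1)\<close>, leaves the upper
  triangular \<open>D = E T\<close>, whose diagonal carries the remaining eigenvalues, so \<open>D\<^sup>m = O(r\<^sup>m)\<close>; and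
  since the first column of \<open>D\<close> vanishes, \<open>E Q A\<^sup>m = D\<^sup>m Q\<close>. Thus \<open>A\<^sup>m w = v\<close> gives
  \<open>E Q v = D\<^sup>m (Q w)\<close>, where \<open>E Q v \<noteq> 0\<close> because \<open>v\<close> is not a \<open>\<lambda>\<close>-eigenvector, and hence
  \<open>\<parallel>w\<parallel>\<^sub>1 \<ge> const \<cdot> r\<^sup>-\<^sup>m\<close>.\<close>

lemma poly_prod_linear_factors_eq_0_iff:
  "poly (\<Prod>a\<leftarrow>xs. [:- a, 1:]) (x :: 'a :: idom) = 0 \<longleftrightarrow> x \<in> set xs"
  by (induct xs) auto

lemma simple_root_notin_cofactors:
  fixes e :: "'a :: idom"
  assumes "order e (\<Prod>a\<leftarrow>e # xs. [:- a, 1:]) = 1"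
  shows "e \<notin> set xs"
proof -
  let ?q = "\<Prod>a\<leftarrow>xs. [:- a, 1:]"
  have "?q \<noteq> 0" by (auto simp: prod_list_zero_iff)
  have "order e ([:- e, 1:] * ?q) = order e [:- e, 1:] + order e ?q"
    by (rule order_mult) (auto simp: prod_list_zero_iff simp del: mult_pCons_left)
  moreover have "order e [:- e, 1:] = 1" using order_power_n_n[of e 1] by simp
  ultimately have "order e ?q = 0" using assms by simp
  then show ?thesis
    using order_gt_0_iff[OF \<open>?q \<noteq> 0\<close>, of e] by (simp add: poly_prod_linear_factors_eq_0_iff)
qed

lemma pow_mat_Suc_left:
  assumes "M \<in> carrier_mat n n"
  shows "M ^\<^sub>m Suc k = M * M ^\<^sub>m k"
proof (induct k)
  case (Suc k)
  have "M ^\<^sub>m Suc (Suc k) = (M * M ^\<^sub>m k) * M" using Suc by simp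
  also have "\<dots> = M * (M ^\<^sub>m k * M)" using assms by (intro assoc_mult_mat) auto
  finally show ?case by simp
qed (use assms in simp)

lemma smult_pow_mat:
  fixes M :: "'a :: comm_ring_1 mat"
  assumes M: "M \<in> carrier_mat n n"
  shows "(a \<cdot>\<^sub>m M) ^\<^sub>m k = a ^ k \<cdot>\<^sub>m M ^\<^sub>m k"
proof (induct k)
  case (Suc k)
  have "(a \<cdot>\<^sub>m M) ^\<^sub>m Suc k = (a ^ k \<cdot>\<^sub>m M ^\<^sub>m k) * (a \<cdot>\<^sub>m M)" using Suc by simp
  also have "\<dots> = a \<cdot>\<^sub>m (a ^ k \<cdot>\<^sub>m (M ^\<^sub>m k * M))"
    using M by (simp add: mult_smult_assoc_mat[of _ n n _ n] mult_smult_distrib[of _ n n _ n])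
  also have "\<dots> = a ^ Suc k \<cdot>\<^sub>m M ^\<^sub>m Suc k" using M by (intro eq_matI) auto
  finally show ?case .
qed (use M in \<open>intro eq_matI, auto\<close>)

lemma norm_mult_mat_vec_index_le:
  fixes M :: "'a :: real_normed_field mat"
  assumes M: "M \<in> carrier_mat n m" and x: "x \<in> carrier_vec m" and b: "norm_bound M b" and i: "i < n"
  shows "norm ((M *\<^sub>v x) $ i) \<le> b * (\<Sum>j<m. norm (x $ j))"
proof -
  have "(M *\<^sub>v x) $ i = (\<Sum>j<m. M $$ (i,j) * x $ j)"
    using M x i by (auto simp: scalar_prod_def lessThan_atLeast0 intro!: sum.cong)
  then have "norm ((M *\<^sub>v x) $ i) \<le> (\<Sum>j<m. norm (M $$ (i,j)) * norm (x $ j))"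
    by (metis (no_types, lifting) norm_mult norm_sum sum.cong)
  also have "\<dots> \<le> (\<Sum>j<m. b * norm (x $ j))"
    using b M i unfolding norm_bound_def by (intro sum_mono mult_right_mono) auto
  finally show ?thesis by (simp add: sum_distrib_left)
qed

lemma similar_mat_wit_pow_mult_vec:
  assumes A: "A \<in> carrier_mat n n" and sim: "similar_mat_wit A T P Q" and x: "x \<in> carrier_vec n"
  shows "Q *\<^sub>v (A ^\<^sub>m k *\<^sub>v x) = T ^\<^sub>m k *\<^sub>v (Q *\<^sub>v x)"
proof -
  from similar_mat_witD2[OF A sim]
  have T: "T \<in> carrier_mat n n" and P: "P \<in> carrier_mat n n" and Q: "Q \<in> carrier_mat n n"
    and QP: "Q * P = 1\<^sub>m n" by auto
  have Tk: "T ^\<^sub>m k \<in> carrier_mat n n" using T by simp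
  have "A ^\<^sub>m k *\<^sub>v x = P *\<^sub>v (T ^\<^sub>m k *\<^sub>v (Q *\<^sub>v x))"
    unfolding similar_mat_wit_pow_id[OF sim, of k]
    using assoc_mult_mat_vec[OF mult_carrier_mat[OF P Tk] Q x] assoc_mult_mat_vec[OF P Tk] Q x
    by simp
  then have "Q *\<^sub>v (A ^\<^sub>m k *\<^sub>v x) = (Q * P) *\<^sub>v (T ^\<^sub>m k *\<^sub>v (Q *\<^sub>v x))"
    using assoc_mult_mat_vec[OF Q P] Tk Q x by simp
  then show ?thesis unfolding QP using Tk Q x by simp
qed

lemma similar_mat_wit_eigenvector:
  fixes A :: "'a :: field mat"
  assumes A: "A \<in> carrier_mat n n" and sim: "similar_mat_wit A T P Q" and x: "x \<in> carrier_vec n"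
    and ev: "T *\<^sub>v (Q *\<^sub>v x) = e \<cdot>\<^sub>v (Q *\<^sub>v x)"
  shows "A *\<^sub>v x = e \<cdot>\<^sub>v x"
proof -
  from similar_mat_witD2[OF A sim]
  have T: "T \<in> carrier_mat n n" and P: "P \<in> carrier_mat n n" and Q: "Q \<in> carrier_mat n n"
    and PQ: "P * Q = 1\<^sub>m n" and APTQ: "A = P * T * Q" by auto
  have "A *\<^sub>v x = (P * T) *\<^sub>v (Q *\<^sub>v x)"
    unfolding APTQ by (rule assoc_mult_mat_vec) (use P T Q x in auto)
  also have "\<dots> = P *\<^sub>v (T *\<^sub>v (Q *\<^sub>v x))"
    by (rule assoc_mult_mat_vec) (use P T Q x in auto)
  also have "\<dots> = e \<cdot>\<^sub>v (P *\<^sub>v (Q *\<^sub>v x))"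
    unfolding ev using Q x by (simp add: mult_mat_vec[OF P])
  also have "\<dots> = e \<cdot>\<^sub>v ((P * Q) *\<^sub>v x)"
    using assoc_mult_mat_vec[OF P Q x] by simp
  finally show ?thesis unfolding PQ using x by simp
qed

lemma schur_decomposition_simple_eigenvalue_first:
  fixes A :: "complex mat"
  assumes A: "A \<in> carrier_mat n n" and ev: "eigenvalue A e"
    and simple: "order e (char_poly A) = 1"
  obtains T P Q where "similar_mat_wit A T P Q" "upper_triangular T" "T $$ (0,0) = e"
    and "\<And>i. 0 < i \<Longrightarrow> i < n \<Longrightarrow> eigenvalue A (T $$ (i,i)) \<and> T $$ (i,i) \<noteq> e"
proof -
  obtain as where cp: "char_poly A = (\<Prod>a\<leftarrow>as. [:- a, 1:])"
    using char_poly_factorized[OF A] by auto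
  have "e \<in> set as"
    using ev unfolding eigenvalue_root_char_poly[OF A] cp poly_prod_linear_factors_eq_0_iff .
  define es where "es = e # remove1 e as"
  have cp': "char_poly A = (\<Prod>a\<leftarrow>es. [:- a, 1:])"
    unfolding cp es_def list.map(2) prod_list.Cons by (rule prod_list_map_remove1[OF \<open>e \<in> set as\<close>])
  have e_notin: "e \<notin> set (tl es)"
    using simple unfolding cp' es_def by (intro simple_root_notin_cofactors) simp
  obtain T P Q where sch: "schur_decomposition A es = (T, P, Q)"
    by (cases "schur_decomposition A es") auto
  with schur_decomposition[OF A cp']
  have sim: "similar_mat_wit A T P Q" and ut: "upper_triangular T" and diag: "diag_mat T = es"
    by auto
  have T: "T \<in> carrier_mat n n" using similar_mat_witD2[OF A sim] by auto
  have len: "length es = n" using diag T unfolding diag_mat_def by auto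
  have Tii: "T $$ (i,i) = es ! i" if "i < n" for i
    using diag T that unfolding diag_mat_def by auto
  show thesis
  proof (rule that[OF sim ut])
    show "T $$ (0,0) = e" using Tii[of 0] len unfolding es_def by auto
    fix i assume i: "0 < i" "i < n"
    then have "T $$ (i,i) \<in> set (tl es)"
      using Tii len unfolding es_def by (cases i) auto
    then show "eigenvalue A (T $$ (i,i)) \<and> T $$ (i,i) \<noteq> e"
      using e_notin unfolding eigenvalue_root_char_poly[OF A] cp' es_def
      by (auto simp: poly_prod_linear_factors_eq_0_iff)
  qed
qed

lemma upper_triangular_pow_norm_bound:
  fixes D :: "complex mat"
  assumes D: "D \<in> carrier_mat n n" and ut: "upper_triangular D" and r: "0 < r"
    and diag: "\<And>i. i < n \<Longrightarrow> cmod (D $$ (i,i)) < r"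
  obtains c where "0 < c" "\<And>k. norm_bound (D ^\<^sub>m k) (c * r ^ k)"
proof (cases "n = 0")
  case True
  then show thesis using D by (intro that[of 1]) (auto simp: norm_bound_def)
next
  case False
  define D' where "D' = (1 / complex_of_real r) \<cdot>\<^sub>m D"
  have D': "D' \<in> carrier_mat n n" using D by (simp add: D'_def)
  have ut': "upper_triangular D'" using ut D unfolding D'_def upper_triangular_def by auto
  obtain ev where ev: "ev \<in> spectrum D'" and sr: "spectral_radius D' = cmod ev"
    using spectral_radius_mem_max(1)[OF D'] False by auto
  have "ev \<in> set (diag_mat D')"
    using ev unfolding spectrum_def eigenvalue_root_char_poly[OF D']
      char_poly_upper_triangular[OF D' ut'] poly_prod_linear_factors_eq_0_iff by simp
  then obtain i where i: "i < n" and "ev = D' $$ (i,i)" using D' unfolding diag_mat_def by auto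
  then have "cmod ev = cmod (D $$ (i,i)) / r" using D r unfolding D'_def by (simp add: norm_divide)
  then have "spectral_radius D' < 1" using sr diag[OF i] r by simp
  then obtain c where c: "\<And>k. norm_bound (D' ^\<^sub>m k) c"
    using spectral_radius_jnf_norm_bound_less_1_upper_triangular[OF D'] by auto
  have DD': "D = complex_of_real r \<cdot>\<^sub>m D'" using D r unfolding D'_def by (intro eq_matI) auto
  show thesis
  proof (rule that[of "max c 1"])
    fix k
    show "norm_bound (D ^\<^sub>m k) (max c 1 * r ^ k)"
    proof (rule norm_boundI)
      fix i j assume "i < dim_row (D ^\<^sub>m k)" "j < dim_col (D ^\<^sub>m k)"
      then have ij: "i < n" "j < n" using pow_carrier_mat[OF D, of k] by auto
      have "cmod ((D ^\<^sub>m k) $$ (i,j)) = r ^ k * cmod ((D' ^\<^sub>m k) $$ (i,j))"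
        unfolding DD' smult_pow_mat[OF D'] using ij D' r by (simp add: norm_mult norm_power)
      also have "\<dots> \<le> r ^ k * max c 1"
      proof (rule mult_left_mono)
        have "dim_row (D' ^\<^sub>m k) = n" "dim_col (D' ^\<^sub>m k) = n"
          using pow_carrier_mat[OF D', of k] by auto
        with c[of k] ij have "cmod ((D' ^\<^sub>m k) $$ (i,j)) \<le> c" unfolding norm_bound_def by auto
        then show "cmod ((D' ^\<^sub>m k) $$ (i,j)) \<le> max c 1" by linarith
      qed (use r in simp)
      finally show "cmod ((D ^\<^sub>m k) $$ (i,j)) \<le> max c 1 * r ^ k" by (simp add: mult.commute)
    qed
  qed simp
qed

definition proj_tail_mat :: "nat \<Rightarrow> 'a :: semiring_1 mat" where
  "proj_tail_mat n = mat n n (\<lambda>(i,j). if i = j \<and> 0 < i then 1 else 0)"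

lemma proj_tail_mat_carrier [simp]: "proj_tail_mat n \<in> carrier_mat n n"
  and proj_tail_mat_dim [simp]: "dim_row (proj_tail_mat n) = n" "dim_col (proj_tail_mat n) = n"
  unfolding proj_tail_mat_def by simp_all

lemma index_proj_tail_mult_mat:
  assumes "M \<in> carrier_mat n m" "i < n" "j < m"
  shows "(proj_tail_mat n * M) $$ (i,j) = (if i = 0 then 0 else M $$ (i,j))"
proof -
  have "(proj_tail_mat n * M) $$ (i,j) = (\<Sum>k<n. (if i = k \<and> 0 < i then 1 else 0) * M $$ (k,j))"
    using assms unfolding proj_tail_mat_def
    by (auto simp: scalar_prod_def lessThan_atLeast0 intro!: sum.cong)
  also have "\<dots> = (\<Sum>k<n. if k = i then (if i = 0 then 0 else M $$ (k,j)) else 0)"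
    by (intro sum.cong) auto
  finally show ?thesis using assms by (simp add: sum.delta')
qed

lemma index_mult_proj_tail_mat:
  assumes "M \<in> carrier_mat m n" "i < m" "j < n"
  shows "(M * proj_tail_mat n) $$ (i,j) = (if j = 0 then 0 else M $$ (i,j))"
proof -
  have "(M * proj_tail_mat n) $$ (i,j) = (\<Sum>k<n. M $$ (i,k) * (if k = j \<and> 0 < j then 1 else 0))"
    using assms unfolding proj_tail_mat_def
    by (auto simp: scalar_prod_def lessThan_atLeast0 intro!: sum.cong)
  also have "\<dots> = (\<Sum>k<n. if k = j then (if j = 0 then 0 else M $$ (i,k)) else 0)"
    by (intro sum.cong) auto
  finally show ?thesis using assms by (simp add: sum.delta')
qed

lemma index_proj_tail_mult_vec:
  assumes "x \<in> carrier_vec n" "i < n"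
  shows "(proj_tail_mat n *\<^sub>v x) $ i = (if i = 0 then 0 else x $ i)"
proof -
  have "(proj_tail_mat n *\<^sub>v x) $ i = (\<Sum>k<n. (if i = k \<and> 0 < i then 1 else 0) * x $ k)"
    using assms unfolding proj_tail_mat_def
    by (auto simp: scalar_prod_def lessThan_atLeast0 intro!: sum.cong)
  also have "\<dots> = (\<Sum>k<n. if k = i then (if i = 0 then 0 else x $ k) else 0)"
    by (intro sum.cong) auto
  finally show ?thesis using assms by (simp add: sum.delta')
qed

lemma upper_triangular_proj_tail_absorb:
  assumes T: "T \<in> carrier_mat n n" and ut: "upper_triangular T"
  shows "proj_tail_mat n * T * proj_tail_mat n = proj_tail_mat n * T"
proof (rule eq_matI)
  fix i j assume "i < dim_row (proj_tail_mat n * T)" "j < dim_col (proj_tail_mat n * T)"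
  then have ij: "i < n" "j < n" using T by auto
  have ET: "proj_tail_mat n * T \<in> carrier_mat n n" using mult_carrier_mat[OF _ T] by simp
  have "(proj_tail_mat n * T) $$ (i,0) = 0"
    using ij index_proj_tail_mult_mat[OF T, of i 0] upper_triangularD[OF ut, of 0 i] T by auto
  then show "(proj_tail_mat n * T * proj_tail_mat n) $$ (i,j) = (proj_tail_mat n * T) $$ (i,j)"
    using index_mult_proj_tail_mat[OF ET ij] by auto
qed (use T in auto)

lemma pow_mat_mult_absorb:
  assumes E: "E \<in> carrier_mat n n" and T: "T \<in> carrier_mat n n" and absorb: "E * T * E = E * T"
  shows "(E * T) ^\<^sub>m Suc k = E * T ^\<^sub>m Suc k"
proof (induct k)
  case (Suc k)
  have "(E * T) ^\<^sub>m Suc (Suc k) = (E * T) * (E * T) ^\<^sub>m Suc k"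
    by (rule pow_mat_Suc_left[OF mult_carrier_mat[OF E T]])
  also have "\<dots> = (E * T * E) * T ^\<^sub>m Suc k"
    unfolding Suc by (rule assoc_mult_mat[symmetric]) (use E T in auto)
  also have "\<dots> = E * (T * T ^\<^sub>m Suc k)"
    unfolding absorb by (rule assoc_mult_mat) (use E T in auto)
  finally show ?case unfolding pow_mat_Suc_left[OF T, of "Suc k"] .
qed (use E T in simp)

lemma upper_triangular_first_axis_eigenvector:
  assumes T: "T \<in> carrier_mat n n" and ut: "upper_triangular T" and x: "x \<in> carrier_vec n"
    and axis: "\<And>i. 0 < i \<Longrightarrow> i < n \<Longrightarrow> x $ i = 0"
  shows "T *\<^sub>v x = T $$ (0,0) \<cdot>\<^sub>v x"
proof (rule eq_vecI)
  fix i assume "i < dim_vec (T $$ (0,0) \<cdot>\<^sub>v x)"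
  then have i: "i < n" using x by simp
  have "(T *\<^sub>v x) $ i = (\<Sum>k<n. T $$ (i,k) * x $ k)"
    using i T x by (auto simp: scalar_prod_def lessThan_atLeast0 intro!: sum.cong)
  also have "\<dots> = (\<Sum>k<n. if k = 0 then T $$ (i,k) * x $ k else 0)"
    using axis by (intro sum.cong) auto
  also have "\<dots> = T $$ (i,0) * x $ 0" using i by (simp add: sum.delta')
  finally show "(T *\<^sub>v x) $ i = (T $$ (0,0) \<cdot>\<^sub>v x) $ i"
    using i x T axis[of i] upper_triangularD[OF ut, of 0 i] by (cases "i = 0") auto
qed (use T x in simp)

lemma upper_triangular_proj_tail_pow_norm_bound:
  fixes T :: "complex mat"
  assumes T: "T \<in> carrier_mat n n" and ut: "upper_triangular T" and r: "0 < r"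
    and diag: "\<And>i. 0 < i \<Longrightarrow> i < n \<Longrightarrow> cmod (T $$ (i,i)) < r"
  obtains c where "0 < c" "\<And>k. norm_bound ((proj_tail_mat n * T) ^\<^sub>m k) (c * r ^ k)"
proof -
  let ?D = "proj_tail_mat n * T"
  have D: "?D \<in> carrier_mat n n" using T by auto
  have D_entry: "?D $$ (i,j) = (if i = 0 then 0 else T $$ (i,j))" if "i < n" "j < n" for i j
    using index_proj_tail_mult_mat[OF T that] .
  have "upper_triangular ?D"
  proof (rule upper_triangularI)
    fix i j assume "j < i" "i < dim_row ?D"
    then show "?D $$ (i,j) = 0" using D_entry[of i j] upper_triangularD[OF ut, of j i] T by auto
  qed
  moreover have "cmod (?D $$ (i,i)) < r" if "i < n" for i
    using D_entry[of i i] diag[of i] r that by auto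
  ultimately show thesis using upper_triangular_pow_norm_bound[OF D _ r] that by blast
qed

lemma simple_eigenvalue_complement_decay:
  fixes A :: "complex mat"
  assumes A: "A \<in> carrier_mat n n" and ev: "eigenvalue A e" and simple: "order e (char_poly A) = 1"
    and r: "0 < r" and small: "\<And>\<mu>. eigenvalue A \<mu> \<Longrightarrow> \<mu> \<noteq> e \<Longrightarrow> cmod \<mu> < r"
  obtains F D Q c where "F \<in> carrier_mat n n" "D \<in> carrier_mat n n" "Q \<in> carrier_mat n n" "0 < c"
    and "\<And>k. norm_bound (D ^\<^sub>m k) (c * r ^ k)"
    and "\<And>m x. 0 < m \<Longrightarrow> x \<in> carrier_vec n \<Longrightarrow> F *\<^sub>v (A ^\<^sub>m m *\<^sub>v x) = D ^\<^sub>m m *\<^sub>v (Q *\<^sub>v x)"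
    and "\<And>x. x \<in> carrier_vec n \<Longrightarrow> F *\<^sub>v x = 0\<^sub>v n \<Longrightarrow> A *\<^sub>v x = e \<cdot>\<^sub>v x"
proof -
  obtain T P Q where sim: "similar_mat_wit A T P Q" and ut: "upper_triangular T"
    and T00: "T $$ (0,0) = e"
    and Tii: "\<And>i. 0 < i \<Longrightarrow> i < n \<Longrightarrow> eigenvalue A (T $$ (i,i)) \<and> T $$ (i,i) \<noteq> e"
    using schur_decomposition_simple_eigenvalue_first[OF A ev simple] by blast
  have T: "T \<in> carrier_mat n n" and Q: "Q \<in> carrier_mat n n"
    using similar_mat_witD2[OF A sim] by auto
  define E :: "complex mat" where "E = proj_tail_mat n"
  define D where "D = E * T"
  have E: "E \<in> carrier_mat n n" and D: "D \<in> carrier_mat n n"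
    unfolding D_def E_def using T by auto
  obtain c where "0 < c" and c: "\<And>k. norm_bound (D ^\<^sub>m k) (c * r ^ k)"
    using upper_triangular_proj_tail_pow_norm_bound[OF T ut r] Tii small
    unfolding D_def E_def by blast
  have D_pow: "D ^\<^sub>m Suc k = E * T ^\<^sub>m Suc k" for k
    unfolding D_def E_def
    by (rule pow_mat_mult_absorb[OF _ T upper_triangular_proj_tail_absorb[OF T ut]]) simp
  show thesis
  proof (rule that[OF mult_carrier_mat[OF E Q] D Q \<open>0 < c\<close> c])
    fix m :: nat and x :: "complex vec" assume "0 < m" and x: "x \<in> carrier_vec n"
    then obtain k where m: "m = Suc k" using gr0_implies_Suc by blast
    have "(E * Q) *\<^sub>v (A ^\<^sub>m m *\<^sub>v x) = E *\<^sub>v (Q *\<^sub>v (A ^\<^sub>m m *\<^sub>v x))"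
      using x by (intro assoc_mult_mat_vec[OF E Q] mult_mat_vec_carrier[OF pow_carrier_mat[OF A]])
    also have "\<dots> = E *\<^sub>v (T ^\<^sub>m m *\<^sub>v (Q *\<^sub>v x))"
      unfolding similar_mat_wit_pow_mult_vec[OF A sim x] ..
    also have "\<dots> = D ^\<^sub>m m *\<^sub>v (Q *\<^sub>v x)"
      unfolding m D_pow using Q x by (intro assoc_mult_mat_vec[symmetric, OF E pow_carrier_mat[OF T]]) simp
    finally show "(E * Q) *\<^sub>v (A ^\<^sub>m m *\<^sub>v x) = D ^\<^sub>m m *\<^sub>v (Q *\<^sub>v x)" .
  next
    fix x :: "complex vec" assume x: "x \<in> carrier_vec n" and "(E * Q) *\<^sub>v x = 0\<^sub>v n"
    then have "E *\<^sub>v (Q *\<^sub>v x) = 0\<^sub>v n" using E Q by simp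
    then have "(Q *\<^sub>v x) $ i = 0" if "0 < i" "i < n" for i
      using that index_proj_tail_mult_vec[of "Q *\<^sub>v x" n i] Q x unfolding E_def by simp
    then have "T *\<^sub>v (Q *\<^sub>v x) = e \<cdot>\<^sub>v (Q *\<^sub>v x)"
      using upper_triangular_first_axis_eigenvector[OF T ut] Q x T00 by auto
    then show "A *\<^sub>v x = e \<cdot>\<^sub>v x" by (rule similar_mat_wit_eigenvector[OF A sim x])
  qed
qed

lemma pow_preimage_norm_lower_bound:
  fixes A :: "complex mat"
  assumes A: "A \<in> carrier_mat n n" and ev: "eigenvalue A e" and simple: "order e (char_poly A) = 1"
    and r: "0 < r" and small: "\<And>\<mu>. eigenvalue A \<mu> \<Longrightarrow> \<mu> \<noteq> e \<Longrightarrow> cmod \<mu> < r"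
    and v: "v \<in> carrier_vec n" and not_ev: "A *\<^sub>v v \<noteq> e \<cdot>\<^sub>v v"
  obtains C where "0 < C"
    and "\<And>m w. 0 < m \<Longrightarrow> w \<in> carrier_vec n \<Longrightarrow> A ^\<^sub>m m *\<^sub>v w = v \<Longrightarrow>
       C / r ^ m < (\<Sum>j<n. cmod (w $ j))"
proof -
  obtain F D Q c where F: "F \<in> carrier_mat n n" and D: "D \<in> carrier_mat n n"
    and Q: "Q \<in> carrier_mat n n" and "0 < c" and c: "\<And>k. norm_bound (D ^\<^sub>m k) (c * r ^ k)"
    and intertwine: "\<And>m x. 0 < m \<Longrightarrow> x \<in> carrier_vec n \<Longrightarrow>
      F *\<^sub>v (A ^\<^sub>m m *\<^sub>v x) = D ^\<^sub>m m *\<^sub>v (Q *\<^sub>v x)"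
    and kernel: "\<And>x. x \<in> carrier_vec n \<Longrightarrow> F *\<^sub>v x = 0\<^sub>v n \<Longrightarrow> A *\<^sub>v x = e \<cdot>\<^sub>v x"
    using simple_eigenvalue_complement_decay[OF A ev simple r small] by blast
  have "F *\<^sub>v v \<noteq> 0\<^sub>v n" using kernel[OF v] not_ev by blast
  then obtain i0 where i0: "i0 < n" and "(F *\<^sub>v v) $ i0 \<noteq> 0"
    using F v by (auto simp: vec_eq_iff)
  define \<delta> where "\<delta> = cmod ((F *\<^sub>v v) $ i0)"
  have \<delta>: "0 < \<delta>" unfolding \<delta>_def using \<open>(F *\<^sub>v v) $ i0 \<noteq> 0\<close> by simp
  obtain b where "norm_bound Q b" using norm_bound_max by blast
  then have b: "norm_bound Q (max b 1)" unfolding norm_bound_def by fastforce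
  define K where "K = c * (real n * max b 1)"
  have K: "0 < K" unfolding K_def using \<open>0 < c\<close> i0 by simp
  show thesis
  proof (rule that[of "\<delta> / (2 * K)"])
    show "0 < \<delta> / (2 * K)" using \<delta> K by simp
    fix m :: nat and w :: "complex vec"
    assume "0 < m" and w: "w \<in> carrier_vec n" and "A ^\<^sub>m m *\<^sub>v w = v"
    then have Fv: "F *\<^sub>v v = D ^\<^sub>m m *\<^sub>v (Q *\<^sub>v w)" using intertwine by blast
    define S where "S = (\<Sum>j<n. cmod (w $ j))"
    have "(\<Sum>j<n. cmod ((Q *\<^sub>v w) $ j)) \<le> (\<Sum>j<n. max b 1 * S)"
      unfolding S_def by (intro sum_mono norm_mult_mat_vec_index_le[OF Q w b]) simp
    then have QS: "(\<Sum>j<n. cmod ((Q *\<^sub>v w) $ j)) \<le> real n * max b 1 * S" by simp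
    have "\<delta> \<le> c * r ^ m * (\<Sum>j<n. cmod ((Q *\<^sub>v w) $ j))"
      unfolding \<delta>_def Fv using Q w
      by (intro norm_mult_mat_vec_index_le[OF pow_carrier_mat[OF D] _ c i0]) simp
    also have "\<dots> \<le> c * r ^ m * (real n * max b 1 * S)"
      by (rule mult_left_mono[OF QS]) (use \<open>0 < c\<close> r in simp)
    also have "\<dots> = K * r ^ m * S" unfolding K_def by (simp add: mult_ac)
    finally have "\<delta> / (K * r ^ m) \<le> S"
      using K r by (simp add: pos_divide_le_eq mult.commute)
    moreover have "\<delta> / (2 * K) / r ^ m < \<delta> / (K * r ^ m)"
      unfolding divide_divide_eq_left mult.assoc using K r \<delta>
      by (intro divide_strict_left_mono) simp_all
    ultimately show "\<delta> / (2 * K) / r ^ m < S" by linarith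
  qed
qed

lemma of_real_mult_mat_vec_neq_smult:
  fixes A :: "real mat"
  assumes A: "A \<in> carrier_mat n n" and v: "v \<in> carrier_vec n"
    and not_kernel: "v \<notin> mat_kernel (A - l \<cdot>\<^sub>m 1\<^sub>m n)"
  shows "map_mat complex_of_real A *\<^sub>v map_vec complex_of_real v
    \<noteq> complex_of_real l \<cdot>\<^sub>v map_vec complex_of_real v"
proof
  assume "map_mat complex_of_real A *\<^sub>v map_vec complex_of_real v
    = complex_of_real l \<cdot>\<^sub>v map_vec complex_of_real v"
  then have "map_vec complex_of_real (A *\<^sub>v v) = map_vec complex_of_real (l \<cdot>\<^sub>v v)"
    unfolding of_real_hom.mult_mat_vec_hom[OF A v] of_real_hom.vec_hom_smult .
  then have "A *\<^sub>v v = l \<cdot>\<^sub>v v" by (rule of_real_hom.vec_hom_inj)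
  moreover have "(l \<cdot>\<^sub>m 1\<^sub>m n) *\<^sub>v v = l \<cdot>\<^sub>v v"
    using v by (intro eq_vecI) auto
  ultimately have "(A - l \<cdot>\<^sub>m 1\<^sub>m n) *\<^sub>v v = 0\<^sub>v n"
    using A v by (simp add: minus_mult_distrib_mat_vec)
  with not_kernel show False unfolding mat_kernel_def using A v by simp
qed

theorem fact2p1:
  fixes A :: "real mat" and d :: nat and l r :: real and v :: "real vec"
  assumes "A \<in> carrier_mat d d"
    and "\<exists>n>0. pos_mat (A ^\<^sub>m n)"
    and "pf_eigenvalue A l"
    and "0 < r" and "r < l"
    and "\<forall>\<mu>. cplx_eigenvalue A \<mu> \<and> \<mu> \<noteq> complex_of_real l \<longrightarrow> cmod \<mu> < r"
    and "v \<in> NonN A"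
    and "v \<notin> mat_kernel (A - l \<cdot>\<^sub>m 1\<^sub>m d)"
  shows "\<exists>C>0. \<exists>N::nat. \<forall>n>N. \<forall>w \<in> carrier_vec d.
           A ^\<^sub>m n *\<^sub>v w = v \<longrightarrow> norm1 w > C / r ^ n"
proof -
  let ?Ac = "map_mat complex_of_real A"
  have "v \<in> {A ^\<^sub>m 0 *\<^sub>v x | x. x \<in> carrier_vec (dim_col A)}"
    using assms(7) unfolding NonN_def by blast
  then have v: "v \<in> carrier_vec d" using assms(1) by auto
  have Ac: "?Ac \<in> carrier_mat d d" and vc: "map_vec complex_of_real v \<in> carrier_vec d"
    using assms(1) v by auto
  have ev: "eigenvalue ?Ac (complex_of_real l)"
    and simple: "order (complex_of_real l) (char_poly ?Ac) = 1"
    using assms(3) unfolding pf_eigenvalue_def cplx_eigenvalue_def by auto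
  have small: "cmod \<mu> < r" if "eigenvalue ?Ac \<mu>" "\<mu> \<noteq> complex_of_real l" for \<mu>
    using assms(6) that unfolding cplx_eigenvalue_def by blast
  obtain C where "0 < C" and bound: "\<And>n w. 0 < n \<Longrightarrow> w \<in> carrier_vec d \<Longrightarrow>
      ?Ac ^\<^sub>m n *\<^sub>v w = map_vec complex_of_real v \<Longrightarrow> C / r ^ n < (\<Sum>j<d. cmod (w $ j))"
    using pow_preimage_norm_lower_bound[OF Ac ev simple \<open>0 < r\<close> small vc
        of_real_mult_mat_vec_neq_smult[OF assms(1) v assms(8)]] by blast
  show ?thesis
  proof (intro exI[of _ C] conjI exI[of _ 0] allI impI ballI)
    fix n :: nat and w assume "0 < n" and w: "w \<in> carrier_vec d" and "A ^\<^sub>m n *\<^sub>v w = v"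
    then have "?Ac ^\<^sub>m n *\<^sub>v map_vec complex_of_real w = map_vec complex_of_real v"
      using of_real_hom.mult_mat_vec_hom[OF pow_carrier_mat[OF assms(1)] w]
        of_real_hom.mat_hom_pow[OF assms(1)] by metis
    moreover have "(\<Sum>j<d. cmod (map_vec complex_of_real w $ j)) = norm1 w"
      unfolding norm1_def using w by (intro sum.cong) auto
    ultimately show "C / r ^ n < norm1 w" using bound[OF \<open>0 < n\<close>] w by (metis map_carrier_vec)
  qed (use \<open>0 < C\<close> in simp)
qed

end
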